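(* Let $n\in\mathbb N$, $r>0$, and let $\gamma_1,\gamma_2:[-r,r]\to\mathbb R^m$ be continuous. Let $\epsilon\ne0$ with $n|\epsilon|<r$. Define, for $\gamma\in\{\gamma_1,\gamma_2\}$, $$v_n(\gamma,\epsilon)=\epsilon^{-1}\sum_{k=-n}^n p_{nk}\,\gamma(k\epsilon),$$ where $p_{n0}=0$ and $p_{nk}=\frac{(-1)^{k+1}(n!)^2}{k(n+k)!(n-k)!}$ for $1\le|k|\le n$. Then $$\bigl|v_n(\gamma_2,\epsilon)-v_n(\gamma_1,\epsilon)\bigr|\le |\epsilon|^{-1}H_n\,\|\gamma_2-\gamma_1\|,$$ where $\|\cdot\|$ is the supremum norm on $[-r,r]$ and $H_n=\sum_{k=1}^n k^{-1}$. *)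

theory Defs
  imports "HOL-Analysis.Analysis"
begin

definition pcoef :: "nat \<Rightarrow> int \<Rightarrow> real" where
  "pcoef n k = (if k = 0 \<or> \<bar>k\<bar> > int n then 0
     else ((-1) powi (k + 1)) * (fact n)^2 /
          (real_of_int k * fact (nat (int n + k)) * fact (nat (int n - k))))"

definition vn :: "nat \<Rightarrow> (real \<Rightarrow> 'a::real_normed_vector) \<Rightarrow> real \<Rightarrow> 'a" where
  "vn n \<gamma> \<epsilon> = (1 / \<epsilon>) *\<^sub>R (\<Sum>k\<in>{- int n..int n}. pcoef n k *\<^sub>R \<gamma> (real_of_int k * \<epsilon>))"

definition supnorm_on :: "real \<Rightarrow> (real \<Rightarrow> 'a::real_normed_vector) \<Rightarrow> real" where
  "supnorm_on r f = (SUP t\<in>{-r..r}. norm (f t))"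

end

theory Submission imports Defs begin

text \<open>Up to sign, p_nk = c_nk / k with c_nk = (n!)^2 / ((n+k)! (n-k)!), extended by c_nk = 0 for
  k > n. The ratio rule (n+k+1) c_n(k+1) = (n-k) c_nk makes k c_nk telescope, so sum_k k c_nk = n/2;
  and c_mk = (1 - k^2/n^2) c_nk for n = m + 1 and all k <= n, so by induction on n the sum
  sum_{k=1}^n c_nk / k grows by 1/(2n) at each step and equals H_n / 2. Hence sum_k |p_nk| = H_n,
  and the estimate is the triangle inequality for the linear map gamma -> v_n(gamma, eps).\<close>

definition binom_ratio :: "nat \<Rightarrow> nat \<Rightarrow> real" where
  "binom_ratio n k = (if k \<le> n then (fact n)^2 / (fact (n + k) * fact (n - k)) else 0)"

lemma binom_ratio_0 [simp]: "binom_ratio n 0 = 1"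
  by (simp add: binom_ratio_def power2_eq_square)

lemma binom_ratio_Suc_right:
  assumes "k < n"
  shows "real (n + Suc k) * binom_ratio n (Suc k) = real (n - k) * binom_ratio n k"
proof -
  obtain m where m: "n - k = Suc m" using assms by (metis Suc_diff_Suc)
  have "n - Suc k = m" using m by simp
  then have "binom_ratio n (Suc k) = (fact n)^2 / (real (n + Suc k) * fact (n + k) * fact m)"
    using assms by (simp add: binom_ratio_def)
  moreover have "binom_ratio n k = (fact n)^2 / (fact (n + k) * (real (Suc m) * fact m))"
    using assms m by (simp add: binom_ratio_def del: of_nat_Suc)
  ultimately show ?thesis
    unfolding m by simp
qed

lemma binom_ratio_Suc_left:
  assumes "k \<le> Suc m"
  shows "real (Suc m + k) * real (Suc m - k) * binom_ratio (Suc m) k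
           = (real (Suc m))^2 * binom_ratio m k"
proof (cases "k = Suc m")
  case False
  then have k: "k \<le> m" "Suc m - k = Suc (m - k)" using assms by auto
  then have "binom_ratio (Suc m) k = (real (Suc m) * fact m)^2
      / (real (Suc m + k) * fact (m + k) * (real (Suc m - k) * fact (m - k)))"
    unfolding binom_ratio_def by (simp del: of_nat_Suc)
  then show ?thesis
    using k by (simp add: binom_ratio_def power_mult_distrib)
qed (simp add: binom_ratio_def)

lemma sum_weighted_binom_ratio: "(\<Sum>k=1..n. real k * binom_ratio n k) = real n / 2"
proof -
  define h where "h k = real (n - k) / 2 * binom_ratio n k" for k
  have step: "real (Suc k) * binom_ratio n (Suc k) = h k - h (Suc k)" if "k \<in> {..<n}" for k
  proof -
    have "real (n - k) * binom_ratio n k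
        = (real (n - Suc k) + 2 * real (Suc k)) * binom_ratio n (Suc k)"
      using binom_ratio_Suc_right[of k n] that by simp
    then show ?thesis
      unfolding h_def by (simp add: field_simps)
  qed
  have "(\<Sum>k=1..n. real k * binom_ratio n k) = (\<Sum>k<n. real (Suc k) * binom_ratio n (Suc k))"
    by (simp add: sum.atLeast1_atMost_eq)
  also have "\<dots> = (\<Sum>k<n. h k - h (Suc k))"
    by (rule sum.cong[OF refl step])
  also have "\<dots> = h 0 - h n"
    by (rule sum_lessThan_telescope')
  finally show ?thesis by (simp add: h_def)
qed

lemma sum_binom_ratio_div: "(\<Sum>k=1..n. binom_ratio n k / real k) = harm n / 2"
proof (induction n)
  case 0
  then show ?case by (simp add: harm_def)
next
  case (Suc m)
  have step: "binom_ratio (Suc m) k / real k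
      = binom_ratio m k / real k + real k * binom_ratio (Suc m) k / (real (Suc m))^2"
    if "k \<in> {1..Suc m}" for k
  proof -
    define N where "N = real (Suc m)"
    have "real (Suc m + k) * real (Suc m - k) = N^2 - (real k)^2"
      using that by (simp add: N_def power2_eq_square algebra_simps)
    then have "N^2 * binom_ratio m k = (N^2 - (real k)^2) * binom_ratio (Suc m) k"
      using binom_ratio_Suc_left[of k m] that by (simp add: N_def)
    moreover have "N > 0" "real k > 0" using that by (auto simp: N_def)
    ultimately show ?thesis
      unfolding N_def[symmetric] by (simp add: field_simps power2_eq_square)
  qed
  have "(\<Sum>k=1..Suc m. binom_ratio (Suc m) k / real k)
      = (\<Sum>k=1..Suc m. binom_ratio m k / real k + real k * binom_ratio (Suc m) k / (real (Suc m))^2)"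
    by (rule sum.cong[OF refl step])
  also have "\<dots> = (\<Sum>k=1..Suc m. binom_ratio m k / real k)
        + (\<Sum>k=1..Suc m. real k * binom_ratio (Suc m) k) / (real (Suc m))^2"
    by (simp only: sum.distrib sum_divide_distrib)
  also have "(\<Sum>k=1..Suc m. binom_ratio m k / real k) = harm m / 2"
    using Suc.IH by (simp add: binom_ratio_def)
  also have "(\<Sum>k=1..Suc m. real k * binom_ratio (Suc m) k) / (real (Suc m))^2 = inverse (real (Suc m)) / 2"
    by (simp only: sum_weighted_binom_ratio) (simp add: power2_eq_square field_simps del: of_nat_Suc)
  finally show ?case by (simp add: harm_Suc)
qed

lemma sum_int_symmetric:
  fixes f :: "int \<Rightarrow> 'a::comm_monoid_add"
  shows "(\<Sum>j\<in>{- int n..int n}. f j) = f 0 + (\<Sum>k=1..n. f (int k) + f (- int k))"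
proof (induction n)
  case (Suc n)
  have "{- int (Suc n)..int (Suc n)} = insert (int (Suc n)) (insert (- int (Suc n)) {- int n..int n})"
    by auto
  then show ?case
    using Suc.IH by (simp add: ac_simps)
qed simp

lemma abs_pcoef:
  assumes "\<bar>j\<bar> = int k" "1 \<le> k" "k \<le> n"
  shows "\<bar>pcoef n j\<bar> = binom_ratio n k / real k"
proof -
  have "\<bar>pcoef n j\<bar> = (fact n)^2 / (real k * fact (nat (int n + j)) * fact (nat (int n - j)))"
    using assms by (simp add: pcoef_def abs_mult power_int_abs flip: of_int_abs)
  moreover have "j = int k \<or> j = - int k"
    using assms(1) by linarith
  moreover have "nat (int n + int k) = n + k" "nat (int n - int k) = n - k"
    using assms(3) by auto
  ultimately show ?thesis
    using assms(3) by (auto simp: binom_ratio_def)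
qed

lemma sum_abs_pcoef: "(\<Sum>j\<in>{- int n..int n}. \<bar>pcoef n j\<bar>) = harm n"
proof -
  have "(\<Sum>j\<in>{- int n..int n}. \<bar>pcoef n j\<bar>)
      = \<bar>pcoef n 0\<bar> + (\<Sum>k=1..n. \<bar>pcoef n (int k)\<bar> + \<bar>pcoef n (- int k)\<bar>)"
    by (rule sum_int_symmetric)
  also have "\<dots> = (\<Sum>k=1..n. 2 * (binom_ratio n k / real k))"
    by (simp add: pcoef_def[of n 0] abs_pcoef)
  also have "\<dots> = harm n"
    unfolding sum_distrib_left[symmetric] sum_binom_ratio_div by simp
  finally show ?thesis .
qed

lemma vn_diff: "vn n (\<lambda>t. f t - g t) \<epsilon> = vn n f \<epsilon> - vn n g \<epsilon>"
  by (simp add: vn_def scaleR_diff_right sum_subtractf)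

lemma norm_vn_le:
  assumes "\<And>j. j \<in> {- int n..int n} \<Longrightarrow> norm (\<gamma> (real_of_int j * \<epsilon>)) \<le> B"
  shows "norm (vn n \<gamma> \<epsilon>) \<le> (1 / \<bar>\<epsilon>\<bar>) * harm n * B"
proof -
  have "norm (\<Sum>j\<in>{- int n..int n}. pcoef n j *\<^sub>R \<gamma> (real_of_int j * \<epsilon>))
      \<le> (\<Sum>j\<in>{- int n..int n}. \<bar>pcoef n j\<bar> * B)"
    by (intro sum_norm_le) (simp add: assms mult_left_mono)
  also have "\<dots> = harm n * B"
    by (simp add: sum_distrib_right[symmetric] sum_abs_pcoef)
  finally show ?thesis
    by (simp add: vn_def divide_right_mono mult.assoc)
qed

lemma norm_le_supnorm_on:
  assumes "continuous_on {-r..r} f" "t \<in> {-r..r}"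
  shows "norm (f t) \<le> supnorm_on r f"
proof -
  have "bdd_above ((\<lambda>t. norm (f t)) ` {-r..r})"
    by (intro bounded_imp_bdd_above compact_imp_bounded compact_continuous_image
        continuous_intros assms(1)) simp
  then show ?thesis
    unfolding supnorm_on_def using assms(2) by (rule cSUP_upper2) simp
qed

theorem mainTheorem3:
  fixes n :: nat and r \<epsilon> :: real and \<gamma>1 \<gamma>2 :: "real \<Rightarrow> real ^ 'm"
  assumes "r > 0"
    and "continuous_on {-r..r} \<gamma>1" and "continuous_on {-r..r} \<gamma>2"
    and "\<epsilon> \<noteq> 0" and "real n * \<bar>\<epsilon>\<bar> < r"
  shows "norm (vn n \<gamma>2 \<epsilon> - vn n \<gamma>1 \<epsilon>)
           \<le> (1 / \<bar>\<epsilon>\<bar>) * harm n * supnorm_on r (\<lambda>t. \<gamma>2 t - \<gamma>1 t)"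
proof -
  have cont: "continuous_on {-r..r} (\<lambda>t. \<gamma>2 t - \<gamma>1 t)"
    using assms(3,2) by (rule continuous_on_diff)
  have nodes: "real_of_int j * \<epsilon> \<in> {-r..r}" if "j \<in> {- int n..int n}" for j
  proof -
    have "\<bar>real_of_int j\<bar> * \<bar>\<epsilon>\<bar> \<le> real n * \<bar>\<epsilon>\<bar>"
      using that by (intro mult_right_mono) auto
    then have "\<bar>real_of_int j * \<epsilon>\<bar> \<le> r"
      using assms(5) by (simp add: abs_mult)
    then show ?thesis
      by (simp add: abs_le_iff)
  qed
  show ?thesis
    unfolding vn_diff[symmetric]
    by (intro norm_vn_le norm_le_supnorm_on[OF cont] nodes)
qed

end
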